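(* Under the standing setup with $\mathrm{Var}(X_N)>0$, if contextual reinforcement holds ($\delta_W\cdot\delta_B\ge0$), then $D\ge 0$ if and only if $D_{ER}\ge D_{NM}$.
   Context: Let $(X,Y,N)$ be a random triple with $X\in\{0,1\}$, $Y$ real-valued, $N$ taking values in a finite set $\mathcal N$. Write $X_n=\mathbb E[X\mid N=n]$, $X_N=\mathbb E[X\mid N]$, $Y_N=\mathbb E[Y\mid N]$. Assume some $n$ has $\Pr(N=n)>0$ and $X_n\in(0,1)$, and $\mathbb E[Y\mid X=x,N=n]\in[\underline Y,\overline Y]$ whenever $\Pr(X=x,N=n)>0$. $D=\mathbb E[Y\mid X=1]-\mathbb E[Y\mid X=0]$; $\delta_B=\mathbb E[\mathrm{Cov}(Y,X\mid N)]$; $\delta_W=\mathbb E[\mathrm{Cov}(Y,X_N\mid X)]$; $D_{ER}=\mathrm{Cov}(Y_N,X_N)/\mathrm{Var}(X_N)$; $D_{NM}=\mathbb E[X_NY_N]/\mathbb E[X_N]-\mathbb E[(1-X_N)Y_N]/\mathbb E[1-X_N]$. *)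

theory Defs
  imports "HOL-Probability.Probability"
begin

text \<open>Conditional expectation of Z given an event A (ratio form; 0 if P(A)=0).\<close>
definition cexp :: "'a measure \<Rightarrow> ('a \<Rightarrow> real) \<Rightarrow> 'a set \<Rightarrow> real" where
  "cexp M Z A = (\<integral>\<omega>. Z \<omega> * indicator A \<omega> \<partial>M) / measure M A"

definition ev :: "'a measure \<Rightarrow> ('a \<Rightarrow> 'b) \<Rightarrow> 'b \<Rightarrow> 'a set" where
  "ev M V v = {\<omega> \<in> space M. V \<omega> = v}"

definition condE :: "'a measure \<Rightarrow> ('a \<Rightarrow> real) \<Rightarrow> ('a \<Rightarrow> 'b) \<Rightarrow> 'a \<Rightarrow> real" where
  "condE M Z V \<omega> = cexp M Z (ev M V (V \<omega>))"

definition condCov :: "'a measure \<Rightarrow> ('a \<Rightarrow> real) \<Rightarrow> ('a \<Rightarrow> real) \<Rightarrow> ('a \<Rightarrow> 'b) \<Rightarrow> 'a \<Rightarrow> real" where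
  "condCov M U W V \<omega> = condE M (\<lambda>x. U x * W x) V \<omega> - condE M U V \<omega> * condE M W V \<omega>"

definition cov :: "'a measure \<Rightarrow> ('a \<Rightarrow> real) \<Rightarrow> ('a \<Rightarrow> real) \<Rightarrow> real" where
  "cov M U W = (\<integral>x. U x * W x \<partial>M) - (\<integral>x. U x \<partial>M) * (\<integral>x. W x \<partial>M)"

definition var :: "'a measure \<Rightarrow> ('a \<Rightarrow> real) \<Rightarrow> real" where
  "var M U = (\<integral>x. (U x - (\<integral>y. U y \<partial>M))\<^sup>2 \<partial>M)"

end

theory Submission
  imports Defs
begin

(* With X binary and N finitely valued, the tower property E[E[Z|N] f(N)] = E[Z f(N)] turns
   every quantity in the statement into a rational function of p = E X, E Y, E[Y X], E[Y X_N]
   and c = E[X_N X] = E[X_N^2]. With C = Cov(Y_N, X_N), V = Var(X_N) = c - p^2 and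
   P = p (1 - p) one gets delta_B = D P - C, delta_W = C - D V, D_ER = C / V and D_NM = C / P.
   As 0 <= X_N <= 1, strictly inside on some cell, V < P; so reinforcement forces D and C to
   have the same sign, and C / V >= C / P holds exactly when C >= 0. *)

lemma ev_eq_vimage: "ev M V v = V -` {v} \<inter> space M"
  by (auto simp: ev_def)

lemma ev_sets_borel: "X \<in> borel_measurable M \<Longrightarrow> ev M X (x::real) \<in> sets M"
  by (simp add: ev_eq_vimage measurable_sets)

lemma ev_sets_count_space: "N \<in> measurable M (count_space UNIV) \<Longrightarrow> ev M N n \<in> sets M"
  by (simp add: ev_eq_vimage measurable_sets)

lemma mult_fun_eq_sum_indicator_ev:
  fixes Z :: "'a \<Rightarrow> real" and V :: "'a \<Rightarrow> 'v::finite"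
  assumes "\<omega> \<in> space M"
  shows "Z \<omega> * f (V \<omega>) = (\<Sum>v\<in>UNIV. f v * (Z \<omega> * indicator (ev M V v) \<omega>))"
proof -
  have "(\<Sum>v\<in>UNIV. f v * (Z \<omega> * indicator (ev M V v) \<omega>)) = (\<Sum>v\<in>UNIV. if v = V \<omega> then f v * Z \<omega> else 0)"
    using assms by (intro sum.cong) (auto simp: ev_def)
  then show ?thesis by simp
qed

lemma integrable_mult_fun_discrete:
  fixes Z :: "'a \<Rightarrow> real" and V :: "'a \<Rightarrow> 'v::finite"
  assumes "\<And>v. ev M V v \<in> sets M" and "integrable M Z"
  shows "integrable M (\<lambda>\<omega>. Z \<omega> * f (V \<omega>))"
proof -
  have "integrable M (\<lambda>\<omega>. \<Sum>v\<in>UNIV. f v * (Z \<omega> * indicator (ev M V v) \<omega>))"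
    using assms by (intro Bochner_Integration.integrable_sum integrable_mult_right integrable_real_mult_indicator)
  then show ?thesis
    by (simp add: mult_fun_eq_sum_indicator_ev cong: Bochner_Integration.integrable_cong)
qed

lemma integral_mult_fun_discrete:
  fixes Z :: "'a \<Rightarrow> real" and V :: "'a \<Rightarrow> 'v::finite"
  assumes "\<And>v. ev M V v \<in> sets M" and "integrable M Z"
  shows "(\<integral>\<omega>. Z \<omega> * f (V \<omega>) \<partial>M) = (\<Sum>v\<in>UNIV. f v * (\<integral>\<omega>. Z \<omega> * indicator (ev M V v) \<omega> \<partial>M))"
proof -
  have "(\<integral>\<omega>. Z \<omega> * f (V \<omega>) \<partial>M) = (\<integral>\<omega>. (\<Sum>v\<in>UNIV. f v * (Z \<omega> * indicator (ev M V v) \<omega>)) \<partial>M)"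
    by (simp add: mult_fun_eq_sum_indicator_ev cong: Bochner_Integration.integral_cong)
  also have "\<dots> = (\<Sum>v\<in>UNIV. f v * (\<integral>\<omega>. Z \<omega> * indicator (ev M V v) \<omega> \<partial>M))"
    using assms by (subst Bochner_Integration.integral_sum) (simp_all add: integrable_real_mult_indicator)
  finally show ?thesis .
qed

lemma (in finite_measure) integrable_fun_discrete:
  fixes V :: "'a \<Rightarrow> 'v::finite"
  assumes "\<And>v. ev M V v \<in> sets M"
  shows "integrable M (\<lambda>\<omega>. f (V \<omega>) :: real)"
  using integrable_mult_fun_discrete[OF assms, of "\<lambda>_. 1"] by simp

lemma (in finite_measure) integrable_condE:
  fixes Z :: "'a \<Rightarrow> real" and V :: "'a \<Rightarrow> 'v::finite"
  assumes "\<And>v. ev M V v \<in> sets M"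
  shows "integrable M (condE M Z V)"
  using integrable_fun_discrete[OF assms, of "\<lambda>v. cexp M Z (ev M V v)"]
  by (simp add: condE_def[abs_def])

(* On a null event cexp is the junk value 0 (division by 0), but the integral vanishes too. *)
lemma (in finite_measure) measure_mult_cexp:
  assumes "A \<in> sets M"
  shows "measure M A * cexp M Z A = (\<integral>\<omega>. Z \<omega> * indicator A \<omega> \<partial>M)"
proof (cases "measure M A = 0")
  case True
  then have "AE \<omega> in M. \<omega> \<notin> A"
    using assms by (intro AE_not_in) (simp add: null_sets_def emeasure_eq_measure)
  then have "AE \<omega> in M. Z \<omega> * indicator A \<omega> = 0"
    by eventually_elim simp
  with True show ?thesis by (simp add: integral_eq_zero_AE)
qed (simp add: cexp_def)

lemma (in finite_measure) integral_condE_mult: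
  fixes Z :: "'a \<Rightarrow> real" and V :: "'a \<Rightarrow> 'v::finite"
  assumes "\<And>v. ev M V v \<in> sets M" and "integrable M Z"
  shows "(\<integral>\<omega>. condE M Z V \<omega> * f (V \<omega>) \<partial>M) = (\<integral>\<omega>. Z \<omega> * f (V \<omega>) \<partial>M)"
proof -
  have "(\<integral>\<omega>. condE M Z V \<omega> * f (V \<omega>) \<partial>M) = (\<integral>\<omega>. 1 * (\<lambda>v. cexp M Z (ev M V v) * f v) (V \<omega>) \<partial>M)"
    by (simp add: condE_def)
  also have "\<dots> = (\<Sum>v\<in>UNIV. f v * (measure M (ev M V v) * cexp M Z (ev M V v)))"
    using assms by (subst integral_mult_fun_discrete) (auto simp: Int_absorb2 sets.sets_into_space mult_ac)
  also have "\<dots> = (\<integral>\<omega>. Z \<omega> * f (V \<omega>) \<partial>M)"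
    using assms by (simp add: measure_mult_cexp integral_mult_fun_discrete)
  finally show ?thesis .
qed

lemma (in finite_measure) integral_condCov_discrete:
  fixes U W :: "'a \<Rightarrow> real" and V :: "'a \<Rightarrow> 'v::finite"
  assumes "\<And>v. ev M V v \<in> sets M" and "integrable M U" and "integrable M (\<lambda>\<omega>. U \<omega> * W \<omega>)"
  shows "(\<integral>\<omega>. condCov M U W V \<omega> \<partial>M) = (\<integral>\<omega>. U \<omega> * W \<omega> \<partial>M) - (\<integral>\<omega>. U \<omega> * condE M W V \<omega> \<partial>M)"
proof -
  have "integrable M (condE M (\<lambda>\<omega>. U \<omega> * W \<omega>) V)"
    by (rule integrable_condE[OF assms(1)])
  moreover have "integrable M (\<lambda>\<omega>. condE M U V \<omega> * condE M W V \<omega>)"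
    using integrable_fun_discrete[OF assms(1), of "\<lambda>v. cexp M U (ev M V v) * cexp M W (ev M V v)"]
    by (simp add: condE_def)
  moreover have "(\<integral>\<omega>. condE M (\<lambda>\<omega>. U \<omega> * W \<omega>) V \<omega> \<partial>M) = (\<integral>\<omega>. U \<omega> * W \<omega> \<partial>M)"
    using integral_condE_mult[OF assms(1,3), of "\<lambda>_. 1"] by simp
  moreover have "(\<integral>\<omega>. condE M U V \<omega> * condE M W V \<omega> \<partial>M) = (\<integral>\<omega>. U \<omega> * condE M W V \<omega> \<partial>M)"
    using integral_condE_mult[OF assms(1,2), of "\<lambda>v. cexp M W (ev M V v)"] by (simp add: condE_def)
  ultimately show ?thesis
    unfolding condCov_def by simp
qed

lemma (in prob_space) integrals_condE_discrete:
  fixes Z W :: "'a \<Rightarrow> real" and V :: "'a \<Rightarrow> 'v::finite"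
  assumes evs: "\<And>v. ev M V v \<in> sets M" and Z: "integrable M Z" and W: "integrable M W"
  shows "(\<integral>\<omega>. condE M W V \<omega> \<partial>M) = (\<integral>\<omega>. W \<omega> \<partial>M)"
    and "(\<integral>\<omega>. 1 - condE M W V \<omega> \<partial>M) = 1 - (\<integral>\<omega>. W \<omega> \<partial>M)"
    and "(\<integral>\<omega>. condE M W V \<omega> * condE M Z V \<omega> \<partial>M) = (\<integral>\<omega>. Z \<omega> * condE M W V \<omega> \<partial>M)"
    and "(\<integral>\<omega>. (1 - condE M W V \<omega>) * condE M Z V \<omega> \<partial>M)
          = (\<integral>\<omega>. Z \<omega> \<partial>M) - (\<integral>\<omega>. Z \<omega> * condE M W V \<omega> \<partial>M)"
    and "cov M (condE M Z V) (condE M W V)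
          = (\<integral>\<omega>. Z \<omega> * condE M W V \<omega> \<partial>M) - (\<integral>\<omega>. Z \<omega> \<partial>M) * (\<integral>\<omega>. W \<omega> \<partial>M)"
proof -
  define w where "w v = cexp M W (ev M V v)" for v
  have WV: "condE M W V \<omega> = w (V \<omega>)" for \<omega>
    by (simp add: condE_def w_def)
  have tower: "(\<integral>\<omega>. condE M U V \<omega> * f (V \<omega>) \<partial>M) = (\<integral>\<omega>. U \<omega> * f (V \<omega>) \<partial>M)"
    if "integrable M U" for U f
    using integral_condE_mult[OF evs that] .
  show mean: "(\<integral>\<omega>. condE M W V \<omega> \<partial>M) = (\<integral>\<omega>. W \<omega> \<partial>M)"
    using tower[OF W, of "\<lambda>_. 1"] by simp
  show "(\<integral>\<omega>. 1 - condE M W V \<omega> \<partial>M) = 1 - (\<integral>\<omega>. W \<omega> \<partial>M)"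
    using integrable_condE[OF evs] by (simp add: mean prob_space)
  show prod: "(\<integral>\<omega>. condE M W V \<omega> * condE M Z V \<omega> \<partial>M) = (\<integral>\<omega>. Z \<omega> * condE M W V \<omega> \<partial>M)"
    using tower[OF Z, of w] by (simp add: WV mult.commute)
  show "(\<integral>\<omega>. (1 - condE M W V \<omega>) * condE M Z V \<omega> \<partial>M)
      = (\<integral>\<omega>. Z \<omega> \<partial>M) - (\<integral>\<omega>. Z \<omega> * condE M W V \<omega> \<partial>M)"
  proof -
    have "(\<integral>\<omega>. (1 - condE M W V \<omega>) * condE M Z V \<omega> \<partial>M) = (\<integral>\<omega>. condE M Z V \<omega> * (1 - w (V \<omega>)) \<partial>M)"
      by (simp add: WV mult.commute)
    also have "\<dots> = (\<integral>\<omega>. Z \<omega> * (1 - w (V \<omega>)) \<partial>M)"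
      by (rule tower[OF Z])
    also have "\<dots> = (\<integral>\<omega>. Z \<omega> - Z \<omega> * w (V \<omega>) \<partial>M)"
      by (simp add: right_diff_distrib)
    also have "\<dots> = (\<integral>\<omega>. Z \<omega> \<partial>M) - (\<integral>\<omega>. Z \<omega> * condE M W V \<omega> \<partial>M)"
      using integrable_mult_fun_discrete[OF evs Z, of w] Z by (simp add: WV)
    finally show ?thesis .
  qed
  show "cov M (condE M Z V) (condE M W V)
      = (\<integral>\<omega>. Z \<omega> * condE M W V \<omega> \<partial>M) - (\<integral>\<omega>. Z \<omega> \<partial>M) * (\<integral>\<omega>. W \<omega> \<partial>M)"
    using prod tower[OF Z, of "\<lambda>_. 1"] by (simp add: cov_def mean mult.commute)
qed

lemma (in prob_space) var_condE:
  fixes W :: "'a \<Rightarrow> real" and V :: "'a \<Rightarrow> 'v::finite"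
  assumes evs: "\<And>v. ev M V v \<in> sets M" and W: "integrable M W"
  shows "var M (condE M W V) = (\<integral>\<omega>. condE M W V \<omega> * W \<omega> \<partial>M) - (\<integral>\<omega>. W \<omega> \<partial>M)\<^sup>2"
proof -
  define w where "w v = cexp M W (ev M V v)" for v
  have WV: "condE M W V = (\<lambda>\<omega>. w (V \<omega>))"
    by (simp add: condE_def w_def fun_eq_iff)
  have "var M (condE M W V) = (\<integral>\<omega>. (condE M W V \<omega>)\<^sup>2 \<partial>M) - (\<integral>\<omega>. condE M W V \<omega> \<partial>M)\<^sup>2"
    unfolding var_def WV
    by (intro variance_eq integrable_fun_discrete[OF evs])
  also have "(\<integral>\<omega>. (condE M W V \<omega>)\<^sup>2 \<partial>M) = (\<integral>\<omega>. condE M W V \<omega> * W \<omega> \<partial>M)"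
    using integral_condE_mult[OF evs W, of w] by (simp add: WV power2_eq_square mult.commute)
  also have "(\<integral>\<omega>. condE M W V \<omega> \<partial>M) = (\<integral>\<omega>. W \<omega> \<partial>M)"
    using integral_condE_mult[OF evs W, of "\<lambda>_. 1"] by simp
  finally show ?thesis .
qed

lemma (in finite_measure) cexp_unit_interval:
  fixes Z :: "'a \<Rightarrow> real"
  assumes "A \<in> sets M" and "Z \<in> borel_measurable M" and "\<forall>\<omega>\<in>space M. 0 \<le> Z \<omega> \<and> Z \<omega> \<le> 1"
  shows "0 \<le> cexp M Z A" and "cexp M Z A \<le> 1"
proof -
  have "integrable M Z"
    using assms(2,3) by (intro integrable_const_bound[where B = 1]) auto
  then have "(\<integral>\<omega>. Z \<omega> * indicator A \<omega> \<partial>M) \<le> (\<integral>\<omega>. 1 * indicator A \<omega> \<partial>M)"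
    using assms by (intro integral_mono integrable_real_mult_indicator) (auto split: split_indicator)
  moreover have "0 \<le> (\<integral>\<omega>. Z \<omega> * indicator A \<omega> \<partial>M)"
    using assms(3) by (intro integral_nonneg_AE AE_I2) (simp split: split_indicator)
  moreover have "measure M (A \<inter> space M) = measure M A"
    using assms(1) by (simp add: Int_absorb2 sets.sets_into_space)
  ultimately show "0 \<le> cexp M Z A" "cexp M Z A \<le> 1"
    unfolding cexp_def by (auto simp: divide_le_eq_1 less_eq_real_def)
qed

lemma (in finite_measure) integral_mult_condE_less:
  fixes X :: "'a \<Rightarrow> real" and V :: "'a \<Rightarrow> 'v::finite"
  assumes evs: "\<And>v. ev M V v \<in> sets M"
    and X: "X \<in> borel_measurable M" "\<forall>\<omega>\<in>space M. 0 \<le> X \<omega> \<and> X \<omega> \<le> 1"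
    and nondegenerate: "0 < measure M (ev M V v)" "0 < cexp M X (ev M V v)" "cexp M X (ev M V v) < 1"
  shows "(\<integral>\<omega>. condE M X V \<omega> * X \<omega> \<partial>M) < (\<integral>\<omega>. X \<omega> \<partial>M)"
proof -
  define x where "x v = cexp M X (ev M V v)" for v
  have XV: "condE M X V \<omega> = x (V \<omega>)" for \<omega>
    by (simp add: condE_def x_def)
  have int_X: "integrable M X"
    using X by (intro integrable_const_bound[where B = 1]) auto
  have "0 < (\<Sum>u\<in>UNIV. x u * (1 - x u) * measure M (ev M V u))"
  proof (rule sum_pos2[of UNIV v])
    show "0 \<le> x u * (1 - x u) * measure M (ev M V u)" for u
      using cexp_unit_interval[OF evs X, of u] by (simp add: x_def)
  qed (use nondegenerate in \<open>auto simp: x_def\<close>)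
  also have "\<dots> = (\<integral>\<omega>. condE M X V \<omega> * (1 - x (V \<omega>)) \<partial>M)"
    using integral_mult_fun_discrete[OF evs, of "\<lambda>_. 1" "\<lambda>u. x u * (1 - x u)"] evs
    by (simp add: XV Int_absorb2 sets.sets_into_space)
  also have "\<dots> = (\<integral>\<omega>. X \<omega> * (1 - x (V \<omega>)) \<partial>M)"
    by (rule integral_condE_mult[OF evs int_X])
  also have "\<dots> = (\<integral>\<omega>. X \<omega> - condE M X V \<omega> * X \<omega> \<partial>M)"
    by (simp add: XV right_diff_distrib mult.commute)
  also have "\<dots> = (\<integral>\<omega>. X \<omega> \<partial>M) - (\<integral>\<omega>. condE M X V \<omega> * X \<omega> \<partial>M)"
    using integrable_mult_fun_discrete[OF evs int_X, of x] int_X by (simp add: XV mult.commute)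
  finally show ?thesis by simp
qed

lemma indicator_ev_binary:
  fixes X :: "'a \<Rightarrow> real"
  assumes "\<omega> \<in> space M" and "X \<omega> \<in> {0, 1}"
  shows "indicator (ev M X 1) \<omega> = X \<omega>" and "indicator (ev M X 0) \<omega> = 1 - X \<omega>"
  using assms by (auto simp: ev_def)

lemma integral_mult_indicator_ev_binary:
  fixes X Z :: "'a \<Rightarrow> real"
  assumes "X \<in> borel_measurable M" and "\<forall>\<omega>\<in>space M. X \<omega> \<in> {0, 1}" and "integrable M Z"
  shows "integrable M (\<lambda>\<omega>. Z \<omega> * X \<omega>)"
    and "(\<integral>\<omega>. Z \<omega> * indicator (ev M X 1) \<omega> \<partial>M) = (\<integral>\<omega>. Z \<omega> * X \<omega> \<partial>M)"
    and "(\<integral>\<omega>. Z \<omega> * indicator (ev M X 0) \<omega> \<partial>M) = (\<integral>\<omega>. Z \<omega> \<partial>M) - (\<integral>\<omega>. Z \<omega> * X \<omega> \<partial>M)"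
proof -
  have eq: "Z \<omega> * indicator (ev M X 1) \<omega> = Z \<omega> * X \<omega>"
    "Z \<omega> * indicator (ev M X 0) \<omega> = Z \<omega> - Z \<omega> * X \<omega>" if "\<omega> \<in> space M" for \<omega>
    using indicator_ev_binary[OF that, of X] that assms(2) by (simp_all add: right_diff_distrib)
  have "integrable M (\<lambda>\<omega>. Z \<omega> * indicator (ev M X 1) \<omega>)"
    using ev_sets_borel[OF assms(1)] assms(3) by (rule integrable_real_mult_indicator)
  then show int: "integrable M (\<lambda>\<omega>. Z \<omega> * X \<omega>)"
    by (subst Bochner_Integration.integrable_cong[OF refl]) (simp_all add: eq)
  show "(\<integral>\<omega>. Z \<omega> * indicator (ev M X 1) \<omega> \<partial>M) = (\<integral>\<omega>. Z \<omega> * X \<omega> \<partial>M)"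
    by (rule Bochner_Integration.integral_cong) (simp_all add: eq)
  have "(\<integral>\<omega>. Z \<omega> * indicator (ev M X 0) \<omega> \<partial>M) = (\<integral>\<omega>. Z \<omega> - Z \<omega> * X \<omega> \<partial>M)"
    by (rule Bochner_Integration.integral_cong) (simp_all add: eq)
  also have "\<dots> = (\<integral>\<omega>. Z \<omega> \<partial>M) - (\<integral>\<omega>. Z \<omega> * X \<omega> \<partial>M)"
    using assms(3) int by (rule Bochner_Integration.integral_diff)
  finally show "(\<integral>\<omega>. Z \<omega> * indicator (ev M X 0) \<omega> \<partial>M) = (\<integral>\<omega>. Z \<omega> \<partial>M) - (\<integral>\<omega>. Z \<omega> * X \<omega> \<partial>M)" .
qed

lemma (in prob_space) cexp_ev_binary:
  fixes X Z :: "'a \<Rightarrow> real"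
  assumes "X \<in> borel_measurable M" and "\<forall>\<omega>\<in>space M. X \<omega> \<in> {0, 1}" and "integrable M Z"
  shows "cexp M Z (ev M X 1) = (\<integral>\<omega>. Z \<omega> * X \<omega> \<partial>M) / (\<integral>\<omega>. X \<omega> \<partial>M)"
    and "cexp M Z (ev M X 0) = ((\<integral>\<omega>. Z \<omega> \<partial>M) - (\<integral>\<omega>. Z \<omega> * X \<omega> \<partial>M)) / (1 - (\<integral>\<omega>. X \<omega> \<partial>M))"
proof -
  note binary = integral_mult_indicator_ev_binary[OF assms(1,2)]
  have "measure M (ev M X x) = (\<integral>\<omega>. 1 * indicator (ev M X x) \<omega> \<partial>M)" for x
    using ev_sets_borel[OF assms(1)] by (simp add: Int_absorb2 sets.sets_into_space)
  then have "measure M (ev M X 1) = (\<integral>\<omega>. X \<omega> \<partial>M)" "measure M (ev M X 0) = 1 - (\<integral>\<omega>. X \<omega> \<partial>M)"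
    using binary(2,3)[of "\<lambda>_. 1"] by (simp_all add: prob_space)
  then show "cexp M Z (ev M X 1) = (\<integral>\<omega>. Z \<omega> * X \<omega> \<partial>M) / (\<integral>\<omega>. X \<omega> \<partial>M)"
    and "cexp M Z (ev M X 0) = ((\<integral>\<omega>. Z \<omega> \<partial>M) - (\<integral>\<omega>. Z \<omega> * X \<omega> \<partial>M)) / (1 - (\<integral>\<omega>. X \<omega> \<partial>M))"
    unfolding cexp_def binary(2,3)[OF assms(3)] by simp_all
qed

lemma (in prob_space) integral_fun_binary:
  fixes X :: "'a \<Rightarrow> real"
  assumes "X \<in> borel_measurable M" and "\<forall>\<omega>\<in>space M. X \<omega> \<in> {0, 1}"
  shows "(\<integral>\<omega>. h (X \<omega>) \<partial>M) = (1 - (\<integral>\<omega>. X \<omega> \<partial>M)) * h 0 + (\<integral>\<omega>. X \<omega> \<partial>M) * h 1"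
proof -
  have "integrable M X"
    using integral_mult_indicator_ev_binary(1)[OF assms, of "\<lambda>_. 1"] by simp
  have "(\<integral>\<omega>. h (X \<omega>) \<partial>M) = (\<integral>\<omega>. h 0 * (1 - X \<omega>) + h 1 * X \<omega> \<partial>M)"
    using assms(2) by (intro Bochner_Integration.integral_cong) auto
  also have "\<dots> = h 0 * (1 - (\<integral>\<omega>. X \<omega> \<partial>M)) + h 1 * (\<integral>\<omega>. X \<omega> \<partial>M)"
    using \<open>integrable M X\<close> by (simp add: prob_space)
  finally show ?thesis by (simp only: mult.commute)
qed

lemma (in prob_space) integral_condCov_binary:
  fixes X U W :: "'a \<Rightarrow> real"
  assumes X: "X \<in> borel_measurable M" "\<forall>\<omega>\<in>space M. X \<omega> \<in> {0, 1}"
    and p: "0 < (\<integral>\<omega>. X \<omega> \<partial>M)" "(\<integral>\<omega>. X \<omega> \<partial>M) < 1"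
    and "integrable M U" "integrable M W" "integrable M (\<lambda>\<omega>. U \<omega> * W \<omega>)"
  shows "(\<integral>\<omega>. condCov M U W X \<omega> \<partial>M) = (\<integral>\<omega>. U \<omega> * W \<omega> \<partial>M)
      - ((\<integral>\<omega>. U \<omega> \<partial>M) - (\<integral>\<omega>. U \<omega> * X \<omega> \<partial>M)) * ((\<integral>\<omega>. W \<omega> \<partial>M) - (\<integral>\<omega>. W \<omega> * X \<omega> \<partial>M))
        / (1 - (\<integral>\<omega>. X \<omega> \<partial>M))
      - (\<integral>\<omega>. U \<omega> * X \<omega> \<partial>M) * (\<integral>\<omega>. W \<omega> * X \<omega> \<partial>M) / (\<integral>\<omega>. X \<omega> \<partial>M)"
    (is "_ = ?rhs")
proof -
  define h where "h x = cexp M (\<lambda>\<omega>. U \<omega> * W \<omega>) (ev M X x) - cexp M U (ev M X x) * cexp M W (ev M X x)" for x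
  have "(\<integral>\<omega>. condCov M U W X \<omega> \<partial>M) = (\<integral>\<omega>. h (X \<omega>) \<partial>M)"
    by (simp add: condCov_def condE_def h_def)
  also have "\<dots> = (1 - (\<integral>\<omega>. X \<omega> \<partial>M)) * h 0 + (\<integral>\<omega>. X \<omega> \<partial>M) * h 1"
    by (rule integral_fun_binary[OF X])
  also have "\<dots> = ?rhs"
  proof -
    note cexp = cexp_ev_binary[OF X]
    define q where "q = (\<integral>\<omega>. X \<omega> \<partial>M)"
    have "q \<noteq> 0" "1 - q \<noteq> 0" using p by (simp_all add: q_def)
    then have "(1 - q) * (A0 / (1 - q) - B0 / (1 - q) * (C0 / (1 - q))) + q * (A1 / q - B1 / q * (C1 / q))
        = A0 + A1 - B0 * C0 / (1 - q) - B1 * C1 / q" for A0 A1 B0 B1 C0 C1 :: real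
      by (simp add: divide_simps) (simp add: algebra_simps)
    then show ?thesis
      unfolding h_def cexp(1)[OF assms(5)] cexp(1)[OF assms(6)] cexp(1)[OF assms(7)]
        cexp(2)[OF assms(5)] cexp(2)[OF assms(6)] cexp(2)[OF assms(7)] q_def[symmetric]
      by simp
  qed
  finally show ?thesis .
qed

lemma sign_iff_of_product_nonneg:
  fixes D C V P :: real
  assumes "0 < V" "V < P" "0 \<le> (C - D * V) * (D * P - C)"
  shows "0 \<le> D \<longleftrightarrow> C / P \<le> C / V"
proof -
  have "0 \<le> D \<longleftrightarrow> 0 \<le> C"
  proof
    assume "0 \<le> D"
    show "0 \<le> C"
    proof (rule ccontr)
      assume "\<not> 0 \<le> C"
      moreover have "0 \<le> D * V" "0 \<le> D * P" using \<open>0 \<le> D\<close> assms(1,2) by simp_all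
      ultimately have "(C - D * V) * (D * P - C) < 0" by (intro mult_neg_pos) linarith+
      then show False using assms(3) by linarith
    qed
  next
    assume "0 \<le> C"
    show "0 \<le> D"
    proof (rule ccontr)
      assume "\<not> 0 \<le> D"
      then have "D * V < 0" "D * P < 0" using assms(1,2) by (simp_all add: mult_neg_pos)
      with \<open>0 \<le> C\<close> have "(C - D * V) * (D * P - C) < 0" by (intro mult_pos_neg) linarith+
      then show False using assms(3) by linarith
    qed
  qed
  also have "\<dots> \<longleftrightarrow> C / P \<le> C / V"
    using assms(1,2) by (smt (verit) divide_left_mono divide_strict_left_mono_neg mult_pos_pos)
  finally show ?thesis .
qed

lemma reinforcement_sign_equivalence:
  fixes p e b u c :: real
  assumes var_pos: "0 < c - p\<^sup>2" and c_less: "c < p"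
    and reinforcement: "0 \<le> (u - (e - b) * (p - c) / (1 - p) - b * c / p) * (b - u)"
  shows "0 \<le> b / p - (e - b) / (1 - p) \<longleftrightarrow> u / p - (e - u) / (1 - p) \<le> (u - e * p) / (c - p\<^sup>2)"
proof -
  have "0 < p * (1 - p)" using var_pos c_less by (simp add: power2_eq_square algebra_simps)
  then have p: "0 < p" "p < 1" by (auto simp: zero_less_mult_iff)
  define D where "D = b / p - (e - b) / (1 - p)"
  define C where "C = u - e * p"
  define V where "V = c - p\<^sup>2"
  define P where "P = p * (1 - p)"
  have within: "u - (e - b) * (p - c) / (1 - p) - b * c / p = C - D * V"
    using p by (simp add: D_def C_def V_def field_simps power2_eq_square)
  have between: "b - u = D * P - C"
    using p by (simp add: D_def C_def P_def field_simps)
  have naive: "u / p - (e - u) / (1 - p) = C / P"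
    using p by (simp add: C_def P_def field_simps)
  have "0 < V" "V < P"
    using var_pos c_less by (simp_all add: V_def P_def power2_eq_square algebra_simps)
  moreover have "0 \<le> (C - D * V) * (D * P - C)"
    using reinforcement by (simp only: within between)
  ultimately have "0 \<le> D \<longleftrightarrow> C / P \<le> C / V"
    by (rule sign_iff_of_product_nonneg)
  then show ?thesis
    unfolding naive by (simp add: D_def C_def V_def)
qed

locale binary_treatment = prob_space M for M :: "'a measure" +
  fixes X Y :: "'a \<Rightarrow> real" and N :: "'a \<Rightarrow> 'n::finite"
  assumes X_measurable: "X \<in> borel_measurable M"
    and X_binary: "\<forall>\<omega>\<in>space M. X \<omega> \<in> {0, 1}"
    and Y_integrable: "integrable M Y"
    and N_measurable: "N \<in> measurable M (count_space UNIV)"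
begin

lemma ev_N_sets: "ev M N n \<in> sets M"
  using N_measurable by (rule ev_sets_count_space)

lemma integrable_X: "integrable M X"
  using integral_mult_indicator_ev_binary(1)[OF X_measurable X_binary, of "\<lambda>_. 1"] by simp

lemma integral_condCov_between:
  "(\<integral>\<omega>. condCov M Y X N \<omega> \<partial>M) = (\<integral>\<omega>. Y \<omega> * X \<omega> \<partial>M) - (\<integral>\<omega>. Y \<omega> * condE M X N \<omega> \<partial>M)"
  using ev_N_sets Y_integrable integral_mult_indicator_ev_binary(1)[OF X_measurable X_binary Y_integrable]
  by (rule integral_condCov_discrete)

lemma integral_condCov_within:
  assumes "0 < (\<integral>\<omega>. X \<omega> \<partial>M)" and "(\<integral>\<omega>. X \<omega> \<partial>M) < 1"
  shows "(\<integral>\<omega>. condCov M Y (condE M X N) X \<omega> \<partial>M) = (\<integral>\<omega>. Y \<omega> * condE M X N \<omega> \<partial>M)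
      - ((\<integral>\<omega>. Y \<omega> \<partial>M) - (\<integral>\<omega>. Y \<omega> * X \<omega> \<partial>M)) * ((\<integral>\<omega>. X \<omega> \<partial>M) - (\<integral>\<omega>. condE M X N \<omega> * X \<omega> \<partial>M))
        / (1 - (\<integral>\<omega>. X \<omega> \<partial>M))
      - (\<integral>\<omega>. Y \<omega> * X \<omega> \<partial>M) * (\<integral>\<omega>. condE M X N \<omega> * X \<omega> \<partial>M) / (\<integral>\<omega>. X \<omega> \<partial>M)"
proof -
  have "integrable M (\<lambda>\<omega>. Y \<omega> * condE M X N \<omega>)"
    using integrable_mult_fun_discrete[OF ev_N_sets Y_integrable, of "\<lambda>n. cexp M X (ev M N n)"]
    by (simp add: condE_def)
  with assms show ?thesis
    using integral_condCov_binary[OF X_measurable X_binary _ _ Y_integrable integrable_condE[OF ev_N_sets]]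
    by (simp add: integrals_condE_discrete(1)[OF ev_N_sets Y_integrable integrable_X])
qed

end

theorem corollary3:
  fixes M :: "'a measure" and X Y :: "'a \<Rightarrow> real" and N :: "'a \<Rightarrow> 'n::finite"
    and Ylo Yhi :: real
  assumes "prob_space M"
    and "X \<in> borel_measurable M" and "\<forall>\<omega>\<in>space M. X \<omega> \<in> {0, 1}"
    and "integrable M Y"
    and "N \<in> measurable M (count_space UNIV)"
    and "\<exists>n. measure M (ev M N n) > 0 \<and> 0 < cexp M X (ev M N n) \<and> cexp M X (ev M N n) < 1"
    and "\<forall>x n. measure M (ev M X x \<inter> ev M N n) > 0 \<longrightarrow>
            cexp M Y (ev M X x \<inter> ev M N n) \<in> {Ylo..Yhi}"
    and "var M (condE M X N) > 0"
    and "(\<integral>\<omega>. condCov M Y (condE M X N) X \<omega> \<partial>M) * (\<integral>\<omega>. condCov M Y X N \<omega> \<partial>M) \<ge> 0"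
  shows "cexp M Y (ev M X 1) - cexp M Y (ev M X 0) \<ge> 0 \<longleftrightarrow>
         cov M (condE M Y N) (condE M X N) / var M (condE M X N) \<ge>
           (\<integral>\<omega>. condE M X N \<omega> * condE M Y N \<omega> \<partial>M) / (\<integral>\<omega>. condE M X N \<omega> \<partial>M)
           - (\<integral>\<omega>. (1 - condE M X N \<omega>) * condE M Y N \<omega> \<partial>M) / (\<integral>\<omega>. 1 - condE M X N \<omega> \<partial>M)"
proof -
  interpret binary_treatment M X Y N
    using assms(1-5) by (simp add: binary_treatment_def binary_treatment_axioms_def)
  define p where "p = (\<integral>\<omega>. X \<omega> \<partial>M)"
  define e where "e = (\<integral>\<omega>. Y \<omega> \<partial>M)"
  define b where "b = (\<integral>\<omega>. Y \<omega> * X \<omega> \<partial>M)"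
  define u where "u = (\<integral>\<omega>. Y \<omega> * condE M X N \<omega> \<partial>M)"
  define c where "c = (\<integral>\<omega>. condE M X N \<omega> * X \<omega> \<partial>M)"
  note moments = integrals_condE_discrete[OF ev_N_sets Y_integrable integrable_X, folded p_def e_def u_def]
  have var: "var M (condE M X N) = c - p\<^sup>2"
    unfolding c_def p_def by (rule var_condE[OF ev_N_sets integrable_X])
  from assms(6) obtain n
    where "0 < measure M (ev M N n)" "0 < cexp M X (ev M N n)" "cexp M X (ev M N n) < 1"
    by blast
  then have "c < p"
    unfolding c_def p_def using X_binary
    by (intro integral_mult_condE_less[OF ev_N_sets X_measurable]) auto
  moreover have "0 < c - p\<^sup>2"
    using assms(8) var by simp
  ultimately have "0 < p * (1 - p)"
    by (simp add: power2_eq_square algebra_simps)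
  then have "0 < p" "p < 1"
    by (auto simp: zero_less_mult_iff)
  show ?thesis
    unfolding cexp_ev_binary[OF X_measurable X_binary Y_integrable] moments var
    using reinforcement_sign_equivalence[OF \<open>0 < c - p\<^sup>2\<close> \<open>c < p\<close>] assms(9)
      integral_condCov_within[folded p_def, OF \<open>0 < p\<close> \<open>p < 1\<close>] integral_condCov_between
    by (simp flip: p_def e_def b_def u_def c_def)
qed

end
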